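(* Let $A$ be a finite set, let $X \subset A^{\mathbb Z}$ be a subshift, and let $n_0 \geq 0$ be an integer. The following are equivalent: (a) for all $u,v \in L(X)$ there exists a word $c \in L(X)$ with $|c| \leq n_0$ such that $ucv \in L(X)$; (b) $X$ is irreducible and for every $u \in L(X)$ there exists a word $c \in L(X)$ with $|c| \leq n_0$ such that $ucu \in L(X)$.
   Context: A subshift of $A^{\mathbb Z}$ is a closed shift-invariant subset (product topology of discrete topologies). $A^*$ is the free monoid of finite words over $A$ (including the empty word), $|w|$ the length, and juxtaposition denotes concatenation. A word $w$ appears in $x\in A^{\mathbb Z}$ if $w$ is empty or $w=x(i)x(i+1)\cdots x(j)$ for some $i\le j$. The language $L(X)$ is the set of words appearing in some configuration of $X$. $X$ is irreducible if for all $u,v\in L(X)$ there is $w\in L(X)$ with $uwv\in L(X)$. *)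

theory Defs
  imports "HOL-Analysis.Analysis"
begin

definition full_shift_top :: "'a set \<Rightarrow> (int \<Rightarrow> 'a) topology" where
  "full_shift_top A = product_topology (\<lambda>_. discrete_topology A) UNIV"

definition shift :: "(int \<Rightarrow> 'a) \<Rightarrow> (int \<Rightarrow> 'a)" where
  "shift x = (\<lambda>i. x (i + 1))"

definition subshift :: "'a set \<Rightarrow> (int \<Rightarrow> 'a) set \<Rightarrow> bool" where
  "subshift A X \<longleftrightarrow> closedin (full_shift_top A) X \<and> shift ` X = X"

definition appears :: "'a list \<Rightarrow> (int \<Rightarrow> 'a) \<Rightarrow> bool" where
  "appears w x \<longleftrightarrow> w = [] \<or> (\<exists>i j. i \<le> j \<and> w = map x [i..j])"

definition lang :: "(int \<Rightarrow> 'a) set \<Rightarrow> 'a list set" where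
  "lang X = {w. \<exists>x\<in>X. appears w x}"

definition irreducible_shift :: "(int \<Rightarrow> 'a) set \<Rightarrow> bool" where
  "irreducible_shift X \<longleftrightarrow>
     (\<forall>u\<in>lang X. \<forall>v\<in>lang X. \<exists>w\<in>lang X. u @ w @ v \<in> lang X)"

end

theory Submission
  imports Defs
begin

text \<open>Given \<open>u, v\<close>, irreducibility yields a word \<open>v w u\<close>; a short connector \<open>c\<close> with
  \<open>(v w u) c (v w u)\<close> in the language contains \<open>u c v\<close> as a factor. The subshift structure is
  only used through the fact that languages of configurations are closed under factors.\<close>

lemma appears_infix:
  assumes "appears (p @ s @ q) x"
  shows "appears s x"
proof (cases "s = []")
  case False
  from assms False obtain i j where ij: "p @ s @ q = map x [i..j]"
    by (auto simp: appears_def)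
  define a where "a = i + int (length p)"
  have len: "length p + length s + length q = nat (j - i + 1)"
    using arg_cong[OF ij, of length] by simp
  have "s = map x [a..a + int (length s) - 1]"
  proof (rule nth_equalityI)
    fix k assume k: "k < length s"
    have "s ! k = (p @ s @ q) ! (length p + k)"
      using k by (simp add: nth_append)
    also have "\<dots> = x (a + int k)"
      using k len by (simp add: ij nth_upto a_def add.assoc)
    finally show "s ! k = map x [a..a + int (length s) - 1] ! k"
      using k by (simp add: nth_upto)
  qed simp
  moreover have "a \<le> a + int (length s) - 1"
    using False by simp
  ultimately show ?thesis
    unfolding appears_def by blast
qed (simp add: appears_def)

lemma lang_infix: "p @ s @ q \<in> lang X \<Longrightarrow> s \<in> lang X"
  unfolding lang_def using appears_infix by blast

lemma connect_via_self_connection: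
  assumes infix_closed: "\<And>p s q. p @ s @ q \<in> L \<Longrightarrow> s \<in> L"
    and irreducible: "\<And>u v. u \<in> L \<Longrightarrow> v \<in> L \<Longrightarrow> \<exists>w. u @ w @ v \<in> L"
    and self_connected: "\<And>u. u \<in> L \<Longrightarrow> \<exists>c\<in>C. u @ c @ u \<in> L"
    and "u \<in> L" "v \<in> L"
  shows "\<exists>c\<in>C. u @ c @ v \<in> L"
proof -
  obtain w where "v @ w @ u \<in> L"
    using irreducible \<open>u \<in> L\<close> \<open>v \<in> L\<close> by blast
  then obtain c where "c \<in> C" and "(v @ w @ u) @ c @ (v @ w @ u) \<in> L"
    using self_connected by blast
  then have "(v @ w) @ (u @ c @ v) @ (w @ u) \<in> L"
    by simp
  with \<open>c \<in> C\<close> show ?thesis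
    using infix_closed by blast
qed

theorem proposition4p1:
  fixes A :: "'a set" and X :: "(int \<Rightarrow> 'a) set" and n0 :: nat
  assumes "finite A" and "subshift A X"
  shows "(\<forall>u\<in>lang X. \<forall>v\<in>lang X. \<exists>c\<in>lang X. length c \<le> n0 \<and> u @ c @ v \<in> lang X)
     \<longleftrightarrow> (irreducible_shift X \<and>
          (\<forall>u\<in>lang X. \<exists>c\<in>lang X. length c \<le> n0 \<and> u @ c @ u \<in> lang X))"
proof
  assume "\<forall>u\<in>lang X. \<forall>v\<in>lang X. \<exists>c\<in>lang X. length c \<le> n0 \<and> u @ c @ v \<in> lang X"
  then show "irreducible_shift X \<and>
      (\<forall>u\<in>lang X. \<exists>c\<in>lang X. length c \<le> n0 \<and> u @ c @ u \<in> lang X)"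
    unfolding irreducible_shift_def by blast
next
  assume "irreducible_shift X \<and>
      (\<forall>u\<in>lang X. \<exists>c\<in>lang X. length c \<le> n0 \<and> u @ c @ u \<in> lang X)"
  then have irreducible: "\<And>u v. u \<in> lang X \<Longrightarrow> v \<in> lang X \<Longrightarrow> \<exists>w. u @ w @ v \<in> lang X"
    and self_connected: "\<And>u. u \<in> lang X \<Longrightarrow> \<exists>c\<in>{c \<in> lang X. length c \<le> n0}. u @ c @ u \<in> lang X"
    unfolding irreducible_shift_def by blast+
  show "\<forall>u\<in>lang X. \<forall>v\<in>lang X. \<exists>c\<in>lang X. length c \<le> n0 \<and> u @ c @ v \<in> lang X"
  proof (intro ballI)
    fix u v assume "u \<in> lang X" "v \<in> lang X"
    with lang_infix irreducible self_connected
    have "\<exists>c\<in>{c \<in> lang X. length c \<le> n0}. u @ c @ v \<in> lang X"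
      by (rule connect_via_self_connection)
    then show "\<exists>c\<in>lang X. length c \<le> n0 \<and> u @ c @ v \<in> lang X"
      by blast
  qed
qed

end
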